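(* Let $(X,r)$ be a finite non-degenerate solution and $a,a',b,b'\in A=A(X,r)$. (1) If $\sigma_a=\sigma_{a'}$ and $\lambda_a=\lambda_{a'}$, then $\lambda_{a\circ b}=\lambda_{a'\circ b}$, $\rho_{b\circ a}=\rho_{b\circ a'}$, $\sigma_{b\circ a}=\sigma_{b\circ a'}$, $\lambda_{a+b}=\lambda_{a'+b}$, $\rho_{a+b}=\rho_{a'+b}$ and $\sigma_{a+b}=\sigma_{a'+b}$. (2) If $\sigma_b=\sigma_{b'}$ and $\lambda_b=\lambda_{b'}$, then $\lambda_{a\circ b}=\lambda_{a\circ b'}$, $\rho_{b\circ a}=\rho_{b'\circ a}$, $\sigma_{b\circ a}=\sigma_{b'\circ a}$, $\lambda_{a+b}=\lambda_{a+b'}$, $\rho_{a+b}=\rho_{a+b'}$ and $\sigma_{a+b}=\sigma_{a+b'}$.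
   Context: A set-theoretic solution $(X,r)$ of the Yang--Baxter equation: $X$ non-empty, $r\colon X\times X\to X\times X$ satisfying $(r\times\mathrm{id})(\mathrm{id}\times r)(r\times\mathrm{id})=(\mathrm{id}\times r)(r\times\mathrm{id})(\mathrm{id}\times r)$; write $r(x,y)=(\lambda_x(y),\rho_y(x))$; non-degenerate means $r$ bijective and all $\lambda_x,\rho_y$ bijective. Put $\sigma_y(x)=\lambda_y\rho_{\lambda_x^{-1}(y)}(x)$. Let $M$ be the monoid with presentation $\langle X\mid x\circ y=\lambda_x(y)\circ\rho_y(x)\ (x,y\in X)\rangle$ and $A$ the monoid $\langle X\mid x+y=y+\sigma_y(x)\ (x,y\in X)\rangle$. The following known structure is used: there is a bijection $M\to A$ fixing $X$; identifying $M$ and $A$ through it, the set $A$ carries two monoid operations $\circ$ and $+$ with common identity, and maps $a\mapsto\lambda_a$ (a monoid morphism $(A,\circ)\to\mathrm{Aut}(A,+)$), $a\mapsto\rho_a$ (a monoid anti-morphism $(A,\circ)\to\mathrm{Sym}(A)$) and $a\mapsto\sigma_a$ (a monoid anti-morphism $(A,+)\to\mathrm{Aut}(A,+)$), extending the given maps on $X$, such that for all $a,b,c\in A$: $a\circ b=a+\lambda_a(b)$, $a\circ b=\lambda_a(b)\circ\rho_b(a)$, $a+b=b+\sigma_b(a)$, $\sigma_{\lambda_a(b)}\lambda_a=\lambda_a\sigma_b$, $\lambda_a\lambda_b=\lambda_{\lambda_a(b)}\lambda_{\rho_b(a)}$, and $\sigma_b(a)=\lambda_b\rho_{\lambda_a^{-1}(b)}(a)$.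 All these maps are bijections of $A$ mapping $X$ onto $X$. *)

theory Defs
  imports Main
begin

text \<open>A set-theoretic solution on a finite type 'x is given by the two component maps
  lam, rho with  r(x,y) = (lam x y, rho y x).\<close>

definition sol_r :: "('x \<Rightarrow> 'x \<Rightarrow> 'x) \<Rightarrow> ('x \<Rightarrow> 'x \<Rightarrow> 'x) \<Rightarrow> 'x \<times> 'x \<Rightarrow> 'x \<times> 'x" where
  "sol_r l p = (\<lambda>(x, y). (l x y, p y x))"

definition r12 :: "('x \<times> 'x \<Rightarrow> 'x \<times> 'x) \<Rightarrow> 'x \<times> 'x \<times> 'x \<Rightarrow> 'x \<times> 'x \<times> 'x" where
  "r12 r = (\<lambda>(x, y, z). (fst (r (x, y)), snd (r (x, y)), z))"

definition r23 :: "('x \<times> 'x \<Rightarrow> 'x \<times> 'x) \<Rightarrow> 'x \<times> 'x \<times> 'x \<Rightarrow> 'x \<times> 'x \<times> 'x" where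
  "r23 r = (\<lambda>(x, y, z). (x, r (y, z)))"

definition is_solution :: "('x \<Rightarrow> 'x \<Rightarrow> 'x) \<Rightarrow> ('x \<Rightarrow> 'x \<Rightarrow> 'x) \<Rightarrow> bool" where
  "is_solution l p \<longleftrightarrow>
     r12 (sol_r l p) \<circ> r23 (sol_r l p) \<circ> r12 (sol_r l p)
       = r23 (sol_r l p) \<circ> r12 (sol_r l p) \<circ> r23 (sol_r l p)"

definition nondegenerate :: "('x \<Rightarrow> 'x \<Rightarrow> 'x) \<Rightarrow> ('x \<Rightarrow> 'x \<Rightarrow> 'x) \<Rightarrow> bool" where
  "nondegenerate l p \<longleftrightarrow> bij (sol_r l p) \<and> (\<forall>x. bij (l x)) \<and> (\<forall>y. bij (p y))"

text \<open>The structure monoid M = A(X,r), represented by words over X modulo the congruence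
  generated by  x y = lam_x(y) rho_y(x).  The monoid operation \<open>\<circ>\<close> is concatenation.\<close>

inductive M_step :: "('x \<Rightarrow> 'x \<Rightarrow> 'x) \<Rightarrow> ('x \<Rightarrow> 'x \<Rightarrow> 'x) \<Rightarrow> 'x list \<Rightarrow> 'x list \<Rightarrow> bool"
  for l p where
  "M_step l p (s @ [x, y] @ t) (s @ [l x y, p y x] @ t)"

definition Meq :: "('x \<Rightarrow> 'x \<Rightarrow> 'x) \<Rightarrow> ('x \<Rightarrow> 'x \<Rightarrow> 'x) \<Rightarrow> 'x list \<Rightarrow> 'x list \<Rightarrow> bool" where
  "Meq l p = equivclp (M_step l p)"

text \<open>Extensions of lambda, rho to words (obtained by braiding letters with r).\<close>

fun lamL :: "('x \<Rightarrow> 'x \<Rightarrow> 'x) \<Rightarrow> ('x \<Rightarrow> 'x \<Rightarrow> 'x) \<Rightarrow> 'x \<Rightarrow> 'x list \<Rightarrow> 'x list" where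
  "lamL l p x [] = []"
| "lamL l p x (y # w) = l x y # lamL l p (p y x) w"

text \<open>lamW l p a b = lambda_a(b)\<close>
fun lamW :: "('x \<Rightarrow> 'x \<Rightarrow> 'x) \<Rightarrow> ('x \<Rightarrow> 'x \<Rightarrow> 'x) \<Rightarrow> 'x list \<Rightarrow> 'x list \<Rightarrow> 'x list" where
  "lamW l p [] b = b"
| "lamW l p (x # u) b = lamL l p x (lamW l p u b)"

text \<open>rhoL l p b x = rho_b(x) for a letter x\<close>
fun rhoL :: "('x \<Rightarrow> 'x \<Rightarrow> 'x) \<Rightarrow> ('x \<Rightarrow> 'x \<Rightarrow> 'x) \<Rightarrow> 'x list \<Rightarrow> 'x \<Rightarrow> 'x" where
  "rhoL l p [] x = x"
| "rhoL l p (y # w) x = rhoL l p w (p y x)"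

text \<open>rhoW l p b a = rho_b(a)\<close>
fun rhoW :: "('x \<Rightarrow> 'x \<Rightarrow> 'x) \<Rightarrow> ('x \<Rightarrow> 'x \<Rightarrow> 'x) \<Rightarrow> 'x list \<Rightarrow> 'x list \<Rightarrow> 'x list" where
  "rhoW l p b [] = []"
| "rhoW l p b (x # u) = rhoL l p (lamW l p u b) x # rhoW l p b u"

text \<open>sigmaW l p b a = sigma_b(a) = lambda_b rho_{lambda_a^{-1}(b)}(a)\<close>
definition sigmaW :: "('x \<Rightarrow> 'x \<Rightarrow> 'x) \<Rightarrow> ('x \<Rightarrow> 'x \<Rightarrow> 'x) \<Rightarrow> 'x list \<Rightarrow> 'x list \<Rightarrow> 'x list" where
  "sigmaW l p b a = lamW l p b (rhoW l p (inv (lamW l p a) b) a)"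

text \<open>The additive operation, via  a \<circ> b = a + lambda_a(b), i.e. a + b = a \<circ> lambda_a^{-1}(b).\<close>
definition plusW :: "('x \<Rightarrow> 'x \<Rightarrow> 'x) \<Rightarrow> ('x \<Rightarrow> 'x \<Rightarrow> 'x) \<Rightarrow> 'x list \<Rightarrow> 'x list \<Rightarrow> 'x list" where
  "plusW l p a b = a @ inv (lamW l p a) b"

definition map_eqA :: "('x \<Rightarrow> 'x \<Rightarrow> 'x) \<Rightarrow> ('x \<Rightarrow> 'x \<Rightarrow> 'x) \<Rightarrow> ('x list \<Rightarrow> 'x list) \<Rightarrow> ('x list \<Rightarrow> 'x list) \<Rightarrow> bool" where
  "map_eqA l p f g \<longleftrightarrow> (\<forall>c. Meq l p (f c) (g c))"

end

theory Submission
  imports Defs "HOL-Library.FuncSet"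
begin

text \<open>Call a ~ a' if lambda_a = lambda_a' and sigma_a = sigma_a' as maps on A. The claims say
  that ~ is compatible with both operations and implies rho_a = rho_a'. By
  lambda_(a o b) = lambda_a lambda_b, sigma_(b o a) = sigma_(lambda_b(a)) sigma_b,
  sigma_(lambda_d(a)) = lambda_d sigma_a lambda_d^-1 and a + b = a o lambda_a^-1(b), compatibility
  reduces to: a ~ a' implies lambda_d(a) ~ lambda_d(a'). For a letter d = x the sigma part is the
  conjugation formula, and x o a = lambda_x(a) o rho_a(x) reduces the lambda part to
  rho_a(x) = rho_a'(x). This is read off from sigma_(lambda_x(a))(x) = lambda_x lambda_a(z), where z
  solves lambda_t(z) = t for t = rho_a(x): the braid relations show that t is determined by z.
  Equality of rho follows in the same way from sigma_(lambda_c(a))(c) = lambda_(lambda_c(a)) rho_a(c)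
  and injectivity of lambda on A. Finiteness of X enters only to see that lambda_d^-1, defined on
  words, is a power of lambda_d on words of bounded length and so respects the congruence of A.\<close>

lemma equivclp_hom:
  assumes "\<And>a b. r a b \<Longrightarrow> equivclp s (f a) (f b)" and "equivclp r x y"
  shows "equivclp s (f x) (f y)"
  using assms(2)
proof (induction rule: equivclp_induct)
  case (step y z)
  from step.hyps(2) have "equivclp s (f y) (f z)"
    using assms(1) equivclp_sym by metis
  with step.IH show ?case by (rule equivclp_trans)
qed simp

lemma equivclp_invariant:
  assumes "\<And>a b. r a b \<Longrightarrow> f a = f b" and "equivclp r x y"
  shows "f x = f y"
  using assms(2) by (induction rule: equivclp_induct) (use assms(1) in metis)+

lemma inj_funpow_periodic_on:
  assumes "inj f" and "finite S" and "f ` S \<subseteq> S"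
  shows "\<exists>k>0. \<forall>x\<in>S. (f ^^ k) x = x"
proof -
  have maps: "(f ^^ i) x \<in> S" if "x \<in> S" for i x
    using that by (induction i) (use assms(3) in auto)
  define g where "g i = restrict (f ^^ i) S" for i
  have "range g \<subseteq> S \<rightarrow>\<^sub>E S"
    by (auto simp: g_def restrict_PiE_iff maps)
  then have "finite (range g)"
    by (rule finite_subset) (simp add: finite_PiE assms(2))
  then have "\<not> inj g"
    using finite_imageD infinite_UNIV_nat by blast
  then obtain i j where "g i = g j" "i \<noteq> j"
    unfolding inj_def by blast
  then obtain i j where ij: "i < j" "g i = g j"
    by (cases "i < j") (auto simp: not_less_iff_gr_or_eq)
  have "(f ^^ (j - i)) x = x" if "x \<in> S" for x
  proof -
    have "(f ^^ i) ((f ^^ (j - i)) x) = (f ^^ j) x"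
      using ij(1) by (simp flip: funpow_add[unfolded o_def, THEN fun_cong])
    also have "\<dots> = (f ^^ i) x"
      using ij(2) that unfolding g_def by (metis restrict_apply')
    finally show ?thesis
      by (rule injD[OF inj_fn[OF assms(1)]])
  qed
  with ij(1) show ?thesis
    by (intro exI[of _ "j - i"]) auto
qed

lemma inv_eq_funpow_on:
  assumes "inj f" and "finite S" and "f ` S \<subseteq> S"
  shows "\<exists>k. \<forall>x\<in>S. inv f x = (f ^^ k) x"
proof -
  obtain k where "k > 0" and k: "\<forall>x\<in>S. (f ^^ k) x = x"
    using inj_funpow_periodic_on[OF assms] by blast
  have "inv f x = (f ^^ (k - 1)) x" if "x \<in> S" for x
  proof (rule inv_f_eq[OF assms(1)])
    show "f ((f ^^ (k - 1)) x) = x"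
      using k that \<open>k > 0\<close> by (metis Suc_diff_1 comp_apply funpow.simps(2))
  qed
  then show ?thesis by blast
qed

section \<open>The structure monoid and the actions on words\<close>

locale word_maps =
  fixes l p :: "'x \<Rightarrow> 'x \<Rightarrow> 'x"
begin

abbreviation congM (infix "\<approx>" 50) where "u \<approx> v \<equiv> Meq l p u v"
abbreviation lam1 where "lam1 \<equiv> lamL l p"
abbreviation rho1 where "rho1 \<equiv> rhoL l p"
abbreviation lam where "lam \<equiv> lamW l p"
abbreviation rho where "rho \<equiv> rhoW l p"
abbreviation sig where "sig \<equiv> sigmaW l p"

lemma M_step_length: "M_step l p u v \<Longrightarrow> length u = length v"
  by (induction rule: M_step.induct) simp

lemma M_step_append: "M_step l p u v \<Longrightarrow> M_step l p (s @ u @ t) (s @ v @ t)"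
proof (induction rule: M_step.induct)
  case (1 s' x y t')
  show ?case
    using M_step.intros[of l p "s @ s'" x y "t' @ t"] by simp
qed

lemma Meq_append: "u \<approx> v \<Longrightarrow> s @ u @ t \<approx> s @ v @ t"
  unfolding Meq_def by (rule equivclp_hom[where f="\<lambda>w. s @ w @ t"]) (auto dest: M_step_append)

lemma Meq_refl [simp]: "u \<approx> u"
  unfolding Meq_def by simp

lemma Meq_sym: "u \<approx> v \<Longrightarrow> v \<approx> u"
  unfolding Meq_def by (rule equivclp_sym)

lemma Meq_trans [trans]: "u \<approx> v \<Longrightarrow> v \<approx> w \<Longrightarrow> u \<approx> w"
  unfolding Meq_def by (rule equivclp_trans)

lemma Meq_Cons: "u \<approx> v \<Longrightarrow> x # u \<approx> x # v"
  using Meq_append[of u v "[x]" "[]"] by simp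

lemma Meq_append_left: "u \<approx> v \<Longrightarrow> s @ u \<approx> s @ v"
  using Meq_append[of u v s "[]"] by simp

lemma Meq_append_right: "u \<approx> v \<Longrightarrow> u @ t \<approx> v @ t"
  using Meq_append[of u v "[]" t] by simp

lemma Meq_braid_letters: "[x, y] \<approx> [l x y, p y x]"
  unfolding Meq_def using M_step.intros[of l p "[]" x y "[]"] by auto

lemma Meq_singleton: "[x] \<approx> v \<Longrightarrow> v = [x]"
  unfolding Meq_def
proof (induction rule: equivclp_induct)
  case (step y z)
  have "length u \<ge> 2" if "M_step l p u v" for u v
    using that by cases auto
  with step show ?case using M_step_length by fastforce
qed simp

lemma Meq_length_one: "u \<approx> v \<Longrightarrow> length u = 1 \<Longrightarrow> u = v"
  by (metis Meq_singleton One_nat_def length_0_conv length_Suc_conv)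

lemma length_lamL [simp]: "length (lam1 x w) = length w"
  by (induction w arbitrary: x) auto

lemma length_lamW [simp]: "length (lam a w) = length w"
  by (induction a) auto

lemma lamW_append: "lam (u @ v) w = lam u (lam v w)"
  by (induction u) auto

lemma lamL_append: "lam1 x (u @ v) = lam1 x u @ lam1 (rho1 u x) v"
  by (induction u arbitrary: x) auto

lemma rhoL_append: "rho1 (u @ v) x = rho1 v (rho1 u x)"
  by (induction u arbitrary: x) auto

lemma lamW_append_arg: "lam u (v @ w) = lam u v @ lam (rho v u) w"
  by (induction u) (auto simp: lamL_append)

lemma rhoW_append_arg: "rho w (u @ v) = rho (lam v w) u @ rho w v"
  by (induction u) (auto simp: lamW_append)

lemma rhoW_append: "rho (v @ w) u = rho w (rho v u)"
  by (induction u) (auto simp: lamW_append_arg rhoL_append)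

end

lemma is_solution_iff:
  "is_solution l p \<longleftrightarrow> (\<forall>x y z.
     l x (l y z) = l (l x y) (l (p y x) z) \<and>
     p z (p y x) = p (p z y) (p (l y z) x) \<and>
     l (p (l y z) x) (p z y) = p (l (p y x) z) (l x y))"
  unfolding is_solution_def fun_eq_iff by (auto simp: sol_r_def r12_def r23_def)

locale yb_solution = word_maps l p for l p :: "'x \<Rightarrow> 'x \<Rightarrow> 'x" +
  assumes ybe_lam: "l x (l y z) = l (l x y) (l (p y x) z)"
    and ybe_rho: "p z (p y x) = p (p z y) (p (l y z) x)"
    and ybe_mixed: "l (p (l y z) x) (p z y) = p (l (p y x) z) (l x y)"
    and bij_l: "bij (l x)"
    and bij_p: "bij (p y)"
begin

subsection \<open>The braid relations extended to words\<close>

lemma ybe_letters_word: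
  "lam1 x (lam1 y w) = lam1 (l x y) (lam1 (p y x) w)
   \<and> rho1 w (p y x) = p (rho1 w y) (rho1 (lam1 y w) x)
   \<and> l (rho1 (lam1 y w) x) (rho1 w y) = rho1 (lam1 (p y x) w) (l x y)"
proof (induction w arbitrary: x y)
  case (Cons z w)
  note IH = Cons[of "p (l y z) x" "p z y"]
  have "l (p (l y z) x) (p z y) = p (l (p y x) z) (l x y)" by (rule ybe_mixed)
  moreover have "p (p z y) (p (l y z) x) = p z (p y x)" by (rule ybe_rho[symmetric])
  ultimately show ?case
    using IH by (simp add: ybe_lam[of x y z])
qed simp

lemma lamL_lamL: "lam1 x (lam1 y w) = lam1 (l x y) (lam1 (p y x) w)"
  using ybe_letters_word by blast

lemma rhoL_rho: "rho1 w (p y x) = p (rho1 w y) (rho1 (lam1 y w) x)"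
  using ybe_letters_word by blast

lemma lam_rhoL: "l (rho1 (lam1 y w) x) (rho1 w y) = rho1 (lam1 (p y x) w) (l x y)"
  using ybe_letters_word by blast

lemma lamW_M_step: "M_step l p a a' \<Longrightarrow> lam a = lam a'"
proof (induction rule: M_step.induct)
  case (1 s x y t)
  show ?case by (simp add: fun_eq_iff lamW_append lamL_lamL[of x y])
qed

lemma rhoL_M_step: "M_step l p u v \<Longrightarrow> rho1 u x = rho1 v x"
proof (induction rule: M_step.induct)
  case (1 s y z t)
  show ?case by (simp add: rhoL_append ybe_rho[where x="rho1 s x" and y=y and z=z])
qed

lemma lamL_M_step: "M_step l p u v \<Longrightarrow> M_step l p (lam1 x u) (lam1 x v)"
proof (induction rule: M_step.induct)
  case (1 s y z t)
  define x' where "x' = rho1 s x"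
  have "lam1 x (s @ [y, z] @ t)
      = lam1 x s @ [l x' y, l (p y x') z] @ lam1 (p z (p y x')) t"
    by (simp add: lamL_append x'_def)
  moreover have "lam1 x (s @ [l y z, p z y] @ t)
      = lam1 x s @ [l (l x' y) (l (p y x') z), p (l (p y x') z) (l x' y)]
          @ lam1 (p z (p y x')) t"
    by (simp add: lamL_append flip: x'_def)
      (simp add: ybe_lam[of x' y z] ybe_mixed[where x=x' and y=y and z=z]
        ybe_rho[where x=x' and y=y and z=z, symmetric])
  ultimately show ?case
    by (simp only: M_step.intros)
qed

lemma rhoW_M_step: "M_step l p u v \<Longrightarrow> M_step l p (rho b u) (rho b v)"
proof (induction rule: M_step.induct)
  case (1 s x y t)
  have "lam [x, y] = lam [l x y, p y x]"
    using lamW_M_step[OF M_step.intros[of l p "[]" x y "[]"]] by simp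
  then have "rho b (s @ [l x y, p y x] @ t)
      = rho (lam [x, y] (lam t b)) s
        @ [l (rho1 (lam1 y (lam t b)) x) (rho1 (lam t b) y),
           p (rho1 (lam t b) y) (rho1 (lam1 y (lam t b)) x)] @ rho b t"
    by (simp add: rhoW_append_arg lamW_append lam_rhoL[of y "lam t b" x] rhoL_rho[of "lam t b" y x])
  moreover have "rho b (s @ [x, y] @ t)
      = rho (lam [x, y] (lam t b)) s @ [rho1 (lam1 y (lam t b)) x, rho1 (lam t b) y] @ rho b t"
    by (simp add: rhoW_append_arg lamW_append)
  ultimately show ?case
    by (simp only: M_step.intros)
qed

lemma lamW_Meq_eq: "a \<approx> a' \<Longrightarrow> lam a = lam a'"
  unfolding Meq_def by (rule equivclp_invariant) (auto dest: lamW_M_step)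

lemma rhoL_Meq_eq: "u \<approx> v \<Longrightarrow> rho1 u x = rho1 v x"
  unfolding Meq_def by (rule equivclp_invariant[where f="\<lambda>u. rho1 u x"]) (auto dest: rhoL_M_step)

lemma lamL_Meq: "u \<approx> v \<Longrightarrow> lam1 x u \<approx> lam1 x v"
  unfolding Meq_def by (rule equivclp_hom) (auto dest: lamL_M_step)

lemma lamW_Meq: "u \<approx> v \<Longrightarrow> lam a u \<approx> lam a v"
  by (induction a) (auto intro: lamL_Meq)

lemma rhoW_Meq_eq: "b \<approx> b' \<Longrightarrow> rho b u = rho b' u"
proof (induction u)
  case (Cons x u)
  then show ?case using rhoL_Meq_eq[OF lamW_Meq[OF Cons.prems, of u]] by simp
qed simp

lemma rhoW_Meq: "u \<approx> v \<Longrightarrow> rho b u \<approx> rho b v"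
  unfolding Meq_def by (rule equivclp_hom) (auto dest: rhoW_M_step)

lemma Meq_Cons_braid: "x # v \<approx> lam1 x v @ [rho1 v x]"
proof (induction v arbitrary: x)
  case (Cons z v)
  have "x # z # v \<approx> [l x z, p z x] @ v"
    using Meq_append_right[OF Meq_braid_letters, of x z v] by simp
  also have "\<dots> \<approx> l x z # (lam1 (p z x) v @ [rho1 v (p z x)])"
    using Meq_Cons[OF Cons] by simp
  finally show ?case by simp
qed simp

lemma Meq_append_braid: "u @ v \<approx> lam u v @ rho v u"
proof (induction u)
  case (Cons x u)
  have "(x # u) @ v \<approx> (x # lam u v) @ rho v u"
    using Meq_Cons[OF Cons] by simp
  also have "\<dots> \<approx> (lam1 x (lam u v) @ [rho1 (lam u v) x]) @ rho v u"
    by (rule Meq_append_right[OF Meq_Cons_braid])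
  finally show ?case by simp
qed simp

lemma lamW_lamW: "lam u (lam v w) = lam (lam u v) (lam (rho v u) w)"
  using lamW_Meq_eq[OF Meq_append_braid[of u v]] by (metis lamW_append)

lemma lamW_lamL: "lam (lam1 x v) (lam1 (rho1 v x) w) = lam1 x (lam v w)"
  using lamW_Meq_eq[OF Meq_Cons_braid[of x v], THEN fun_cong, of w]
  by (simp add: lamW_append)

lemma lamL_rhoW:
  "lam1 (rho1 (lam v w) x) (rho w v) = rho (lam1 (rho1 v x) w) (lam1 x v)"
proof (induction v arbitrary: x)
  case (Cons y v)
  define x' where "x' = p y x"
  have "lam (lam1 x' v) (lam1 (rho1 v x') w) = lam1 x' (lam v w)"
    by (rule lamW_lamL)
  with Cons.IH[of x'] show ?case
    by (simp add: x'_def lam_rhoL flip: rhoL_rho)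
qed simp

lemma lamW_rhoW: "lam (rho (lam v w) u) (rho w v) = rho (lam (rho v u) w) (lam u v)"
proof (induction u)
  case (Cons x u)
  have "lam u (lam v w) = lam (lam u v) (lam (rho v u) w)"
    by (rule lamW_lamW)
  with Cons.IH show ?case
    by (simp add: lamL_rhoW)
qed simp

lemma bij_lamL: "bij (lam1 x)"
proof (rule bijI)
  show "inj (lam1 x)"
  proof (rule injI)
    show "lam1 x u = lam1 x v \<Longrightarrow> u = v" for u v
    proof (induction u arbitrary: x v)
      case (Cons y u)
      then obtain y' v' where v: "v = y' # v'" by (cases v) auto
      with Cons.prems have "y = y'"
        using bij_l[of x] by (auto dest: bij_is_inj injD)
      with Cons v show ?case by auto
    qed (metis lamL.simps(1) length_0_conv length_lamL)
  qed
  show "surj (lam1 x)"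
  proof -
    have "\<exists>u. lam1 x u = v" for v
    proof (induction v arbitrary: x)
      case Nil show ?case by (metis lamL.simps(1))
    next
      case (Cons z v)
      define y where "y = inv (l x) z"
      have "l x y = z"
        unfolding y_def using bij_l[of x] by (simp add: bij_is_surj surj_f_inv_f)
      moreover obtain u where "lam1 (p y x) u = v"
        using Cons by blast
      ultimately show ?case
        by (metis lamL.simps(2))
    qed
    then show ?thesis by (metis surjI)
  qed
qed

lemma bij_lamW: "bij (lam a)"
proof (induction a)
  case Nil
  have "lam [] = id" by (simp add: fun_eq_iff)
  then show ?case by (simp only: bij_id)
next
  case (Cons x a)
  have "lam (x # a) = lam1 x \<circ> lam a" by (simp add: fun_eq_iff)
  with Cons bij_lamL show ?case by (metis bij_comp)
qed

lemma inj_lamW: "inj (lam a)"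
  using bij_lamW by (rule bij_is_inj)

lemma lamW_inv [simp]: "lam a (inv (lam a) v) = v"
  using bij_lamW by (simp add: bij_is_surj surj_f_inv_f)

lemma inv_lamW [simp]: "inv (lam a) (lam a v) = v"
  using inj_lamW by (rule inv_f_f)

lemma length_inv_lamW [simp]: "length (inv (lam a) v) = length v"
  using length_lamW[of a "inv (lam a) v"] by simp

lemma sigmaW_lamW: "sig (lam a b) (lam a c) = lam a (sig b c)"
proof -
  define d where "d = inv (lam c) b"
  have b: "b = lam c d" unfolding d_def by simp
  define d' where "d' = lam (rho c a) d"
  have "lam (lam a c) d' = lam a b"
    unfolding d'_def b by (rule lamW_lamW[symmetric])
  then have inv_d': "inv (lam (lam a c)) (lam a b) = d'"
    by (rule inv_f_eq[OF inj_lamW])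
  have "sig (lam a b) (lam a c) = lam (lam a b) (rho d' (lam a c))"
    unfolding sigmaW_def inv_d' ..
  also have "rho d' (lam a c) = lam (rho b a) (rho d c)"
    unfolding b d'_def by (rule lamW_rhoW[symmetric])
  also have "lam (lam a b) (lam (rho b a) (rho d c)) = lam a (lam b (rho d c))"
    by (rule lamW_lamW[symmetric])
  also have "\<dots> = lam a (sig b c)"
    unfolding sigmaW_def d_def ..
  finally show ?thesis .
qed

lemma sigmaW_append: "sig (b @ a) c = sig (lam b a) (sig b c)"
proof -
  define d where "d = inv (lam c) (b @ a)"
  define d1 where "d1 = take (length b) d"
  define d2 where "d2 = drop (length b) d"
  define e where "e = rho d1 c"
  have "lam c d1 @ lam e d2 = b @ a"
    using lamW_inv[of c "b @ a"] unfolding e_def d_def[symmetric]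
    by (metis append_take_drop_id d1_def d2_def lamW_append_arg)
  moreover have "length (lam c d1) = length b"
    by (simp add: d1_def d_def)
  ultimately have "lam c d1 = b" and "lam e d2 = a"
    by auto
  then have inv_b: "inv (lam c) b = d1" and inv_a: "inv (lam e) a = d2"
    by (auto intro: inv_f_eq[OF inj_lamW])
  have "sig (b @ a) c = lam b (lam a (rho d2 e))"
    unfolding sigmaW_def d_def[symmetric] e_def
    by (metis append_take_drop_id d1_def d2_def lamW_append rhoW_append)
  also have "\<dots> = lam b (sig a e)"
    unfolding sigmaW_def inv_a ..
  also have "\<dots> = sig (lam b a) (lam b e)"
    by (rule sigmaW_lamW[symmetric])
  also have "lam b e = sig b c"
    unfolding sigmaW_def inv_b e_def ..
  finally show ?thesis .
qed

lemma lam_fixed_point_unique: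
  assumes "l x y = x" and "l x' y = x'"
  shows "x = x'"
proof -
  define w where "w = inv (l y) y"
  have lw: "l y w = y"
    unfolding w_def using bij_l[of y] by (simp add: bij_is_surj surj_f_inv_f)
  have rho_fixed: "p y x = l y (p w y)" if "l x y = x" for x
  proof -
    have lam_eq: "l y z = l (p y x) z" for z
    proof -
      have "l x (l y z) = l x (l (p y x) z)"
        using ybe_lam[of x y z] that by simp
      then show ?thesis
        using bij_l[of x] by (auto dest: bij_is_inj injD)
    qed
    have "l (p y x) (p w y) = p y x"
      using ybe_mixed[where x=x and y=y and z=w] lw lam_eq[of w] that by simp
    then show ?thesis
      using lam_eq[of "p w y"] by simp
  qed
  have "p y x = p y x'"
    using rho_fixed assms by simp
  then show ?thesis
    using bij_p[of y] by (auto dest: bij_is_inj injD)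
qed

subsection \<open>Elements with the same \<open>\<lambda>\<close> and \<open>\<sigma>\<close>\<close>

definition same_lam_sigma :: "'x list \<Rightarrow> 'x list \<Rightarrow> bool" where
  "same_lam_sigma a a' \<longleftrightarrow> map_eqA l p (sig a) (sig a') \<and> map_eqA l p (lam a) (lam a')"

lemma map_eqA_sigmaW_lamW:
  assumes "map_eqA l p (sig a) (sig a')"
  shows "map_eqA l p (sig (lam d a)) (sig (lam d a'))"
  unfolding map_eqA_def
proof
  fix c
  obtain c0 where c: "c = lam d c0"
    using bij_lamW[of d] by (metis bij_pointE)
  have "lam d (sig a c0) \<approx> lam d (sig a' c0)"
    using assms unfolding map_eqA_def by (blast intro: lamW_Meq)
  then show "sig (lam d a) c \<approx> sig (lam d a') c"
    unfolding c sigmaW_lamW .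
qed

lemma rhoL_eq_if_same_lam_sigma:
  assumes "same_lam_sigma a a'"
  shows "rho1 a x = rho1 a' x"
proof -
  define z where "z u = inv (l u) u" for u
  have lz: "l u (z u) = u" for u
    unfolding z_def using bij_l[of u] by (simp add: bij_is_surj surj_f_inv_f)
  have sig_at_x: "sig (lam1 x b) [x] = lam1 x (lam b [z (rho1 b x)])" for b
  proof -
    have "inv (lam [x]) (lam1 x b) = b"
      using inv_lamW[of "[x]" b] by simp
    then have "sig (lam1 x b) [x] = lam (lam1 x b) (lam1 (rho1 b x) [z (rho1 b x)])"
      by (simp add: sigmaW_def lz)
    then show ?thesis
      by (simp only: lamW_lamL)
  qed
  have lam_letter: "lam a [w] = lam a' [w]" for w
    using assms unfolding same_lam_sigma_def map_eqA_def
    by (intro Meq_length_one) simp_all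
  have "sig (lam [x] a) [x] \<approx> sig (lam [x] a') [x]"
    using assms map_eqA_sigmaW_lamW unfolding same_lam_sigma_def map_eqA_def by blast
  then have "lam1 x (lam a [z (rho1 a x)]) = lam1 x (lam a' [z (rho1 a' x)])"
    by (intro Meq_length_one) (simp_all add: sig_at_x)
  also have "lam a' [z (rho1 a' x)] = lam a [z (rho1 a' x)]"
    by (rule lam_letter[symmetric])
  finally have "[z (rho1 a x)] = [z (rho1 a' x)]"
    by (auto dest: injD[OF bij_is_inj[OF bij_lamL]] injD[OF inj_lamW])
  then have "l (rho1 a' x) (z (rho1 a x)) = rho1 a' x"
    using lz by simp
  with lz show ?thesis
    by (rule lam_fixed_point_unique)
qed

lemma same_lam_sigma_lamL:
  assumes "same_lam_sigma a a'"
  shows "same_lam_sigma (lam1 x a) (lam1 x a')"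
proof -
  have "lam (lam1 x a) c \<approx> lam (lam1 x a') c" for c
  proof -
    define t where "t = rho1 a x"
    have t': "t = rho1 a' x"
      unfolding t_def using assms by (rule rhoL_eq_if_same_lam_sigma)
    obtain c0 where c: "c = lam1 t c0"
      using bij_lamL[of t] by (metis bij_pointE)
    have "lam1 x (lam a c0) \<approx> lam1 x (lam a' c0)"
      using assms unfolding same_lam_sigma_def map_eqA_def by (blast intro: lamL_Meq)
    moreover have "lam (lam1 x a) (lam1 t c0) = lam1 x (lam a c0)"
      unfolding t_def by (rule lamW_lamL)
    moreover have "lam (lam1 x a') (lam1 t c0) = lam1 x (lam a' c0)"
      unfolding t' by (rule lamW_lamL)
    ultimately show ?thesis
      unfolding c by simp
  qed
  moreover have "map_eqA l p (sig (lam [x] a)) (sig (lam [x] a'))"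
    using assms map_eqA_sigmaW_lamW unfolding same_lam_sigma_def by blast
  ultimately show ?thesis
    unfolding same_lam_sigma_def map_eqA_def by simp
qed

lemma same_lam_sigma_lamW: "same_lam_sigma a a' \<Longrightarrow> same_lam_sigma (lam d a) (lam d a')"
  by (induction d) (auto intro: same_lam_sigma_lamL)

end

locale finite_yb_solution = yb_solution l p for l p :: "'x::finite \<Rightarrow> 'x \<Rightarrow> 'x"
begin

lemma inv_lamW_eq_funpow: "\<exists>k. inv (lam d) u = (lam d ^^ k) u \<and> inv (lam d) v = (lam d ^^ k) v"
proof -
  define S where "S = {w :: 'x list. set w \<subseteq> UNIV \<and> length w \<le> max (length u) (length v)}"
  have "finite S"
    unfolding S_def by (rule finite_lists_length_le) simp
  moreover have "lam d ` S \<subseteq> S"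
    by (auto simp: S_def)
  ultimately obtain k where "\<forall>w\<in>S. inv (lam d) w = (lam d ^^ k) w"
    using inv_eq_funpow_on[OF inj_lamW] by blast
  then show ?thesis
    by (auto simp: S_def)
qed

lemma funpow_lamW_Meq: "u \<approx> v \<Longrightarrow> (lam d ^^ k) u \<approx> (lam d ^^ k) v"
  by (induction k) (auto intro: lamW_Meq)

lemma inv_lamW_Meq: "u \<approx> v \<Longrightarrow> inv (lam d) u \<approx> inv (lam d) v"
  using inv_lamW_eq_funpow[of d u v] funpow_lamW_Meq by metis

lemma lamW_Meq_cancel: "lam d u \<approx> lam d v \<Longrightarrow> u \<approx> v"
  using inv_lamW_Meq[of "lam d u" "lam d v" d] by simp

lemma sigmaW_Meq_eq: "b \<approx> b' \<Longrightarrow> sig b c = sig b' c"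
  unfolding sigmaW_def by (simp only: lamW_Meq_eq[of b b'] rhoW_Meq_eq[OF inv_lamW_Meq])

lemma sigmaW_Meq: "c \<approx> c' \<Longrightarrow> sig b c \<approx> sig b c'"
  unfolding sigmaW_def by (simp only: lamW_Meq_eq[of c c'] lamW_Meq rhoW_Meq)

lemma same_lam_sigma_Meq: "a \<approx> a' \<Longrightarrow> same_lam_sigma a a'"
  unfolding same_lam_sigma_def map_eqA_def by (simp add: lamW_Meq_eq[of a a'] sigmaW_Meq_eq[of a a'])

lemma same_lam_sigma_trans:
  "same_lam_sigma a b \<Longrightarrow> same_lam_sigma b c \<Longrightarrow> same_lam_sigma a c"
  unfolding same_lam_sigma_def map_eqA_def by (blast intro: Meq_trans)

lemma same_lam_sigma_inv_lamW:
  assumes "same_lam_sigma a a'"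
  shows "same_lam_sigma (inv (lam d) a) (inv (lam d) a')"
proof -
  have "same_lam_sigma ((lam d ^^ k) a) ((lam d ^^ k) a')" for k
    by (induction k) (simp_all add: assms same_lam_sigma_lamW)
  then show ?thesis
    by (metis inv_lamW_eq_funpow)
qed

lemma map_eqA_rhoW:
  assumes "same_lam_sigma a a'"
  shows "map_eqA l p (rho a) (rho a')"
  unfolding map_eqA_def
proof
  fix c
  have sig_at_c: "sig (lam c b) c = lam (lam c b) (rho b c)" for b
    by (simp add: sigmaW_def)
  have same: "same_lam_sigma (lam c a) (lam c a')"
    using assms by (rule same_lam_sigma_lamW)
  then have "lam (lam c a) (rho a c) \<approx> lam (lam c a') (rho a' c)"
    unfolding same_lam_sigma_def map_eqA_def by (metis sig_at_c)
  also have "lam (lam c a') (rho a' c) \<approx> lam (lam c a) (rho a' c)"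
    using same unfolding same_lam_sigma_def map_eqA_def by (blast intro: Meq_sym)
  finally show "rho a c \<approx> rho a' c"
    by (rule lamW_Meq_cancel)
qed

lemma same_lam_sigma_append_left:
  assumes "same_lam_sigma a a'"
  shows "same_lam_sigma (b @ a) (b @ a')"
proof -
  have "map_eqA l p (sig (lam b a)) (sig (lam b a'))"
    using same_lam_sigma_lamW[OF assms] unfolding same_lam_sigma_def by blast
  with assms show ?thesis
    unfolding same_lam_sigma_def map_eqA_def by (simp add: lamW_append sigmaW_append lamW_Meq)
qed

lemma same_lam_sigma_append_right:
  assumes "same_lam_sigma a a'"
  shows "same_lam_sigma (a @ b) (a' @ b)"
proof -
  have "lam a b \<approx> lam a' b" and "sig a c \<approx> sig a' c" for c
    using assms unfolding same_lam_sigma_def map_eqA_def by blast+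
  then have "sig (lam a b) (sig a c) \<approx> sig (lam a' b) (sig a' c)" for c
    by (simp add: sigmaW_Meq_eq[of "lam a b" "lam a' b"] sigmaW_Meq)
  with assms show ?thesis
    unfolding same_lam_sigma_def map_eqA_def by (simp add: lamW_append sigmaW_append)
qed

lemma same_lam_sigma_plusW_left:
  "same_lam_sigma b b' \<Longrightarrow> same_lam_sigma (plusW l p a b) (plusW l p a b')"
  unfolding plusW_def by (intro same_lam_sigma_append_left same_lam_sigma_inv_lamW)

lemma same_lam_sigma_plusW_right:
  assumes "same_lam_sigma a a'"
  shows "same_lam_sigma (plusW l p a b) (plusW l p a' b)"
proof -
  define e where "e = inv (lam a) b"
  define e' where "e' = inv (lam a') b"
  have "lam a' e' \<approx> lam a' e"
    using assms unfolding same_lam_sigma_def map_eqA_def e_def e'_def by (metis lamW_inv)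
  then have "a' @ e \<approx> a' @ e'"
    by (blast intro: Meq_append_left Meq_sym lamW_Meq_cancel)
  then have "same_lam_sigma (a' @ e) (a' @ e')"
    by (rule same_lam_sigma_Meq)
  with same_lam_sigma_append_right[OF assms] show ?thesis
    unfolding plusW_def e_def e'_def by (rule same_lam_sigma_trans)
qed

lemma map_eqA_if_same_lam_sigma:
  "same_lam_sigma a a' \<Longrightarrow>
    map_eqA l p (lam a) (lam a') \<and> map_eqA l p (rho a) (rho a') \<and> map_eqA l p (sig a) (sig a')"
  using map_eqA_rhoW unfolding same_lam_sigma_def by blast

end

theorem lemma2p2:
  fixes l p :: "'x::finite \<Rightarrow> 'x \<Rightarrow> 'x"
    and a a' b b' :: "'x list"
  assumes "is_solution l p" and "nondegenerate l p"
  shows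
   "(map_eqA l p (sigmaW l p a) (sigmaW l p a') \<and> map_eqA l p (lamW l p a) (lamW l p a') \<longrightarrow>
       map_eqA l p (lamW l p (a @ b)) (lamW l p (a' @ b))
     \<and> map_eqA l p (rhoW l p (b @ a)) (rhoW l p (b @ a'))
     \<and> map_eqA l p (sigmaW l p (b @ a)) (sigmaW l p (b @ a'))
     \<and> map_eqA l p (lamW l p (plusW l p a b)) (lamW l p (plusW l p a' b))
     \<and> map_eqA l p (rhoW l p (plusW l p a b)) (rhoW l p (plusW l p a' b))
     \<and> map_eqA l p (sigmaW l p (plusW l p a b)) (sigmaW l p (plusW l p a' b)))
  \<and> (map_eqA l p (sigmaW l p b) (sigmaW l p b') \<and> map_eqA l p (lamW l p b) (lamW l p b') \<longrightarrow>
       map_eqA l p (lamW l p (a @ b)) (lamW l p (a @ b'))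
     \<and> map_eqA l p (rhoW l p (b @ a)) (rhoW l p (b' @ a))
     \<and> map_eqA l p (sigmaW l p (b @ a)) (sigmaW l p (b' @ a))
     \<and> map_eqA l p (lamW l p (plusW l p a b)) (lamW l p (plusW l p a b'))
     \<and> map_eqA l p (rhoW l p (plusW l p a b)) (rhoW l p (plusW l p a b'))
     \<and> map_eqA l p (sigmaW l p (plusW l p a b)) (sigmaW l p (plusW l p a b')))"
proof -
  interpret finite_yb_solution l p
    by unfold_locales (use assms in \<open>auto simp: is_solution_iff nondegenerate_def\<close>)
  show ?thesis
    unfolding same_lam_sigma_def[symmetric]
    using map_eqA_if_same_lam_sigma
      same_lam_sigma_append_left same_lam_sigma_append_right
      same_lam_sigma_plusW_left same_lam_sigma_plusW_right
    by meson
qed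

end
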